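(* There exists a constant $c_G>0$, depending only on $\Omega$, such that for all $\vec u\in H^1_0(\Omega)^3$, $$ \int_\Omega G[\vec u]\,dx\ge c_G\int_\Omega|\vec u|^2dx . $$
   Context: $\Omega\subset\mathbb{R}^2$ is a bounded domain with $C^{1,1}$ boundary. For $\vec v=(v_1,v_2,v_3):\Omega\to\mathbb{R}^3$, with $\partial_1,\partial_2$ the partial derivatives in $x_1,x_2$: $\operatorname{curl}\vec v=(\partial_2v_3,-\partial_1v_3,\partial_1v_2-\partial_2v_1)$, $\|\nabla\vec v\|^2=\sum_{i=1}^2\sum_{k=1}^3(\partial_iv_k)^2$, and $G[\vec v]=\|\nabla\vec v\|^2+2\vec v\cdot\operatorname{curl}\vec v+2|\vec v|^2$. *)

theory Defs
  imports "HOL-Analysis.Analysis"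
begin

type_synonym pt = "real ^ 2"

definition pd :: "2 \<Rightarrow> (pt \<Rightarrow> real) \<Rightarrow> pt \<Rightarrow> real" where
  "pd i f x = frechet_derivative f (at x) (axis i 1)"

coinductive cinf :: "(pt \<Rightarrow> real) \<Rightarrow> bool" where
  "\<lbrakk> \<forall>x. f differentiable (at x); \<forall>i. cinf (pd i f) \<rbrakk> \<Longrightarrow> cinf f"

definition test_fun :: "pt set \<Rightarrow> (pt \<Rightarrow> real) \<Rightarrow> bool" where
  "test_fun \<Omega> \<phi> \<longleftrightarrow> cinf \<phi> \<and> compact (closure {x. \<phi> x \<noteq> 0})
      \<and> closure {x. \<phi> x \<noteq> 0} \<subseteq> \<Omega>"

definition L2 :: "pt set \<Rightarrow> (pt \<Rightarrow> real) \<Rightarrow> bool" where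
  "L2 \<Omega> f \<longleftrightarrow> f \<in> borel_measurable (lebesgue_on \<Omega>)
      \<and> integrable (lebesgue_on \<Omega>) (\<lambda>x. (f x)\<^sup>2)"

definition weak_pd :: "pt set \<Rightarrow> 2 \<Rightarrow> (pt \<Rightarrow> real) \<Rightarrow> (pt \<Rightarrow> real) \<Rightarrow> bool" where
  "weak_pd \<Omega> i f g \<longleftrightarrow>
     (\<forall>K. compact K \<and> K \<subseteq> \<Omega> \<longrightarrow> integrable (lebesgue_on K) f \<and> integrable (lebesgue_on K) g)
     \<and> (\<forall>\<phi>. test_fun \<Omega> \<phi> \<longrightarrow>
          integral\<^sup>L (lebesgue_on \<Omega>) (\<lambda>x. f x * pd i \<phi> x)
          = - integral\<^sup>L (lebesgue_on \<Omega>) (\<lambda>x. g x * \<phi> x))"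

text \<open>H^1_0(Omega): closure of C_c^infinity(Omega) in the H^1 norm.\<close>
definition H10 :: "pt set \<Rightarrow> (pt \<Rightarrow> real) \<Rightarrow> bool" where
  "H10 \<Omega> f \<longleftrightarrow> L2 \<Omega> f \<and>
     (\<exists>g :: 2 \<Rightarrow> pt \<Rightarrow> real. (\<forall>i. weak_pd \<Omega> i f (g i) \<and> L2 \<Omega> (g i)) \<and>
        (\<exists>\<phi> :: nat \<Rightarrow> pt \<Rightarrow> real. (\<forall>n. test_fun \<Omega> (\<phi> n)) \<and>
           (\<lambda>n. integral\<^sup>L (lebesgue_on \<Omega>) (\<lambda>x. (\<phi> n x - f x)\<^sup>2)
              + (\<Sum>i\<in>UNIV. integral\<^sup>L (lebesgue_on \<Omega>) (\<lambda>x. (pd i (\<phi> n) x - g i x)\<^sup>2)))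
           \<longlonglongrightarrow> 0))"

text \<open>Bounded domain with C^{1,1} boundary: open, connected, bounded, and near every
  boundary point, after a rigid change of coordinates, Omega is the region below the graph
  of a C^1 function with Lipschitz derivative.\<close>
definition C11_domain :: "pt set \<Rightarrow> bool" where
  "C11_domain \<Omega> \<longleftrightarrow> open \<Omega> \<and> connected \<Omega> \<and> \<Omega> \<noteq> {} \<and> bounded \<Omega> \<and>
     (\<forall>p\<in>frontier \<Omega>. \<exists>r>0. \<exists>Q :: real^2^2. \<exists>h h' :: real \<Rightarrow> real. \<exists>L.
        orthogonal_matrix Q \<and>
        (\<forall>t. (h has_real_derivative h' t) (at t)) \<and>
        (\<forall>s t. \<bar>h' s - h' t\<bar> \<le> L * \<bar>s - t\<bar>) \<and>
        \<Omega> \<inter> ball p r = {x \<in> ball p r. (Q *v (x - p)) $ 2 < h ((Q *v (x - p)) $ 1)})"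

text \<open>Pointwise density G[v] given values v = (v1,v2,v3) and gradient D with
  D $ i $ k = partial_i v_k.\<close>
definition Gdens :: "real^3 \<Rightarrow> real^3^2 \<Rightarrow> real" where
  "Gdens v D =
     (\<Sum>i\<in>UNIV. \<Sum>k\<in>UNIV. (D $ i $ k)\<^sup>2)
     + 2 * (v $ 1 * (D $ 2 $ 3) + v $ 2 * (- (D $ 1 $ 3)) + v $ 3 * (D $ 1 $ 2 - D $ 2 $ 1))
     + 2 * (norm v)\<^sup>2"

end

theory Submission
  imports Defs "HOL-Computational_Algebra.Polynomial"
begin

text \<open>Expanding the density,
  \<open>G[v] = |v|\<^sup>2 + (\<partial>\<^sub>1v\<^sub>1 + \<partial>\<^sub>2v\<^sub>2)\<^sup>2 + (\<partial>\<^sub>2v\<^sub>3 + v\<^sub>1)\<^sup>2 + (v\<^sub>2 - \<partial>\<^sub>1v\<^sub>3)\<^sup>2 + (\<partial>\<^sub>1v\<^sub>2 - \<partial>\<^sub>2v\<^sub>1 + v\<^sub>3)\<^sup>2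
    + 2 (\<partial>\<^sub>1v\<^sub>2 \<partial>\<^sub>2v\<^sub>1 - \<partial>\<^sub>1v\<^sub>1 \<partial>\<^sub>2v\<^sub>2)\<close>,
  and the last term, a Jacobian, integrates to zero over \<open>H\<^sup>1\<^sub>0(\<Omega>)\<close>: for test functions
  \<open>\<integral> \<partial>\<^sub>1\<phi> \<partial>\<^sub>2\<psi> = \<integral> \<partial>\<^sub>2\<phi> \<partial>\<^sub>1\<psi>\<close>, and this identity survives \<open>L\<^sup>2\<close>-limits. Hence the inequality holds
  with \<open>c\<^sub>G = 1\<close>; of the hypotheses on \<open>\<Omega>\<close> only openness is needed. Since the gradient \<open>D\<close> in the
  statement is an arbitrary weak derivative, the argument also needs uniqueness of weak derivatives
  almost everywhere, obtained by testing against smooth bumps that approximate indicators of boxes.\<close>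

coinductive cinf_real :: "(real \<Rightarrow> real) \<Rightarrow> bool" where
  cinf_realI: "(\<And>x. (f has_real_derivative f' x) (at x)) \<Longrightarrow> cinf_real f' \<Longrightarrow> cinf_real f"

lemma cinf_real_derivative:
  assumes "cinf_real f"
  obtains f' where "\<And>x. (f has_real_derivative f' x) (at x)" "cinf_real f'"
  using assms by (cases rule: cinf_real.cases) auto

lemma cinf_real_affine:
  assumes "cinf_real f"
  shows "cinf_real (\<lambda>t. k * f (c * t + d))"
proof -
  have "\<exists>f k. cinf_real f \<and> h = (\<lambda>t. k * f (c * t + d)) \<Longrightarrow> cinf_real h" for h
  proof (coinduction arbitrary: h k rule: cinf_real.coinduct)
    case cinf_real
    then obtain f k where f: "cinf_real f" and h: "h = (\<lambda>t. k * f (c * t + d))" by auto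
    obtain f' where f': "\<And>x. (f has_real_derivative f' x) (at x)" "cinf_real f'"
      using cinf_real_derivative[OF f] by blast
    have "(h has_real_derivative (k * c) * f' (c * x + d)) (at x)" for x
      unfolding h by (rule derivative_eq_intros DERIV_chain2[OF f'(1)] | simp)+
    then show ?case
      using f'(2) by (intro exI[of _ h] exI[of _ "\<lambda>x. (k * c) * f' (c * x + d)"]) auto
  qed
  then show ?thesis using assms by blast
qed

text \<open>Products are handled coinductively through finite sums of products of smooth functions,
  a class that is closed under differentiation.\<close>

lemma has_real_derivative_sum_list_mult:
  assumes "\<forall>(f, g) \<in> set xs. cinf_real f \<and> cinf_real g"
  shows "\<exists>ys. (\<forall>(f, g) \<in> set ys. cinf_real f \<and> cinf_real g) \<and>
    (\<forall>x. ((\<lambda>t. \<Sum>(f, g)\<leftarrow>xs. f t * g t) has_real_derivative (\<Sum>(f, g)\<leftarrow>ys. f x * g x)) (at x))"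
  using assms
proof (induction xs)
  case Nil
  then show ?case by (auto intro!: exI[of _ "[]"])
next
  case (Cons fg xs)
  obtain f g where fg: "fg = (f, g)" by (cases fg)
  with Cons.prems have "cinf_real f" "cinf_real g" by auto
  then obtain f' g' where f': "\<And>x. (f has_real_derivative f' x) (at x)" "cinf_real f'"
    and g': "\<And>x. (g has_real_derivative g' x) (at x)" "cinf_real g'"
    by (meson cinf_real_derivative)
  from Cons obtain ys where ys: "\<forall>(f, g) \<in> set ys. cinf_real f \<and> cinf_real g"
    "\<And>x. ((\<lambda>t. \<Sum>(f, g)\<leftarrow>xs. f t * g t) has_real_derivative (\<Sum>(f, g)\<leftarrow>ys. f x * g x)) (at x)"
    by auto
  have "((\<lambda>t. f t * g t + (\<Sum>(f, g)\<leftarrow>xs. f t * g t)) has_real_derivative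
      (f x * g' x + f' x * g x) + (\<Sum>(f, g)\<leftarrow>ys. f x * g x)) (at x)" for x
    by (intro DERIV_add DERIV_mult' f'(1) g'(1) ys(2))
  then show ?case
    using ys(1) f'(2) g'(2) \<open>cinf_real f\<close> \<open>cinf_real g\<close>
    by (intro exI[of _ "(f', g) # (f, g') # ys"]) (auto simp: fg algebra_simps)
qed

lemma cinf_real_sum_list_mult:
  assumes "\<forall>(f, g) \<in> set xs. cinf_real f \<and> cinf_real g"
  shows "cinf_real (\<lambda>t. \<Sum>(f, g)\<leftarrow>xs. f t * g t)"
proof -
  have "\<exists>xs. (\<forall>(f, g) \<in> set xs. cinf_real f \<and> cinf_real g) \<and> h = (\<lambda>t. \<Sum>(f, g)\<leftarrow>xs. f t * g t)
      \<Longrightarrow> cinf_real h" for h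
  proof (coinduction arbitrary: h rule: cinf_real.coinduct)
    case cinf_real
    then obtain xs where "\<forall>(f, g) \<in> set xs. cinf_real f \<and> cinf_real g"
      and h: "h = (\<lambda>t. \<Sum>(f, g)\<leftarrow>xs. f t * g t)"
      by auto
    from has_real_derivative_sum_list_mult[OF this(1)] obtain ys
      where "\<forall>(f, g) \<in> set ys. cinf_real f \<and> cinf_real g"
        "\<forall>x. ((\<lambda>t. \<Sum>(f, g)\<leftarrow>xs. f t * g t) has_real_derivative (\<Sum>(f, g)\<leftarrow>ys. f x * g x)) (at x)"
      by blast
    then show ?case
      by (intro exI[of _ h] exI[of _ "\<lambda>x. \<Sum>(f, g)\<leftarrow>ys. f x * g x"] conjI disjI1)
         (use h in auto)
  qed
  then show ?thesis using assms by blast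
qed

lemma cinf_real_mult:
  assumes "cinf_real f" "cinf_real g"
  shows "cinf_real (\<lambda>t. f t * g t)"
  using cinf_real_sum_list_mult[of "[(f, g)]"] assms by simp

text \<open>The derivatives of \<open>t \<mapsto> exp (-1/t)\<close> (extended by \<open>0\<close> for \<open>t \<le> 0\<close>) are again of the form
  \<open>t \<mapsto> p (1/t) exp (-1/t)\<close> for polynomials \<open>p\<close>; this class is closed under differentiation.\<close>

definition poly_exp_flat :: "real poly \<Rightarrow> real \<Rightarrow> real" where
  "poly_exp_flat p t = (if t > 0 then poly p (1/t) * exp (-1/t) else 0)"

lemma poly_mult_exp_neg_tendsto_0:
  fixes p :: "real poly"
  shows "((\<lambda>s. poly p s * exp (-s)) \<longlongrightarrow> 0) at_top"
proof -
  have "((\<lambda>s. \<Sum>i\<le>degree p. coeff p i * (s ^ i / exp s)) \<longlongrightarrow> (\<Sum>i\<le>degree p. coeff p i * 0)) at_top"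
    by (intro tendsto_intros tendsto_power_div_exp_0)
  moreover have "(\<lambda>s. \<Sum>i\<le>degree p. coeff p i * (s ^ i / exp s)) = (\<lambda>s. poly p s * exp (-s))"
    by (simp add: poly_altdef sum_distrib_right exp_minus divide_inverse mult.assoc)
  ultimately show ?thesis by simp
qed

lemma poly_exp_flat_has_real_derivative:
  "(poly_exp_flat p has_real_derivative poly_exp_flat (monom 1 2 * (p - pderiv p)) t) (at t)"
proof (cases t "0 :: real" rule: linorder_cases)
  case less
  show ?thesis
    by (rule has_field_derivative_transform_within_open[of "\<lambda>_. 0" _ _ "{..<0}"])
       (use less in \<open>auto simp: poly_exp_flat_def\<close>)
next
  case equal
  have "((\<lambda>h. (poly_exp_flat p (0 + h) - poly_exp_flat p 0) / h) \<longlongrightarrow> 0) (at 0)"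
  proof (rule filterlim_split_at)
    show "((\<lambda>h. (poly_exp_flat p (0 + h) - poly_exp_flat p 0) / h) \<longlongrightarrow> 0) (at_left 0)"
      by (rule tendsto_eventually)
         (auto simp: poly_exp_flat_def eventually_at_left_field intro!: exI[of _ "-1"])
    have "((\<lambda>y. poly (pCons 0 p) (inverse y) * exp (- inverse y)) \<longlongrightarrow> 0) (at_right 0)"
      by (rule filterlim_compose[OF poly_mult_exp_neg_tendsto_0 filterlim_inverse_at_top_right])
    then have "((\<lambda>y. poly (pCons 0 p) (1/y) * exp (-1/y)) \<longlongrightarrow> 0) (at_right 0)"
      by (simp add: inverse_eq_divide)
    then show "((\<lambda>h. (poly_exp_flat p (0 + h) - poly_exp_flat p 0) / h) \<longlongrightarrow> 0) (at_right 0)"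
      apply (rule Lim_transform_eventually)
      by (auto simp: poly_exp_flat_def eventually_at_right_field intro!: exI[of _ 1])
  qed
  then show ?thesis
    using equal by (simp add: DERIV_def poly_exp_flat_def)
next
  case greater
  have d: "((\<lambda>t. poly p (1/t) * exp (-1/t)) has_real_derivative
      poly (pderiv p) (1/t) * (- 1 / t^2) * exp (-1/t) + poly p (1/t) * (exp (-1/t) * (1/t^2))) (at t)"
    using greater by (auto intro!: derivative_eq_intros simp: power2_eq_square field_simps)
  have e: "poly (pderiv p) (1/t) * (- 1 / t^2) * exp (-1/t) + poly p (1/t) * (exp (-1/t) * (1/t^2))
      = poly_exp_flat (monom 1 2 * (p - pderiv p)) t"
    using greater by (simp add: poly_exp_flat_def poly_monom algebra_simps power2_eq_square)
  show ?thesis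
    apply (rule has_field_derivative_transform_within_open[of _ _ _ "{0<..}"])
    using d e greater by (auto simp: poly_exp_flat_def)
qed

lemma cinf_real_poly_exp_flat: "cinf_real (poly_exp_flat p)"
proof -
  have "\<exists>p. f = poly_exp_flat p \<Longrightarrow> cinf_real f" for f
  proof (coinduction arbitrary: f rule: cinf_real.coinduct)
    case cinf_real
    then show ?case using poly_exp_flat_has_real_derivative by blast
  qed
  then show ?thesis by blast
qed

section \<open>Smooth bump functions on boxes\<close>

definition flat_exp :: "real \<Rightarrow> real" where
  "flat_exp = poly_exp_flat 1"

lemma flat_exp_eq: "flat_exp t = (if t > 0 then exp (-1/t) else 0)"
  by (simp add: flat_exp_def poly_exp_flat_def)

lemma flat_exp_nonneg: "0 \<le> flat_exp t"
  by (simp add: flat_exp_eq)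

lemma flat_exp_le_1: "flat_exp t \<le> 1"
  by (simp add: flat_exp_eq)

lemma flat_exp_scaled_tendsto_1:
  assumes "s > 0"
  shows "(\<lambda>n. flat_exp (real (Suc n) * s)) \<longlonglongrightarrow> 1"
proof -
  have "(\<lambda>n. exp (- (1 / s) * inverse (real (Suc n)))) \<longlonglongrightarrow> exp (- (1/s) * 0)"
    by (intro tendsto_intros LIMSEQ_inverse_real_of_nat)
  moreover have "flat_exp (real (Suc n) * s) = exp (- (1 / s) * inverse (real (Suc n)))" for n
    using assms by (simp add: flat_exp_eq divide_inverse mult.commute)
  ultimately show ?thesis by simp
qed

definition bump :: "real \<Rightarrow> real \<Rightarrow> real \<Rightarrow> real \<Rightarrow> real" where
  "bump n a b t = flat_exp (n * (t - a)) * flat_exp (n * (b - t))"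

lemma cinf_real_bump: "cinf_real (bump n a b)"
proof -
  have "cinf_real (\<lambda>t. (1 * flat_exp (n * t + (- n * a))) * (1 * flat_exp ((- n) * t + n * b)))"
    by (intro cinf_real_mult cinf_real_affine) (simp_all add: flat_exp_def cinf_real_poly_exp_flat)
  moreover have "(\<lambda>t. (1 * flat_exp (n * t + (- n * a))) * (1 * flat_exp ((- n) * t + n * b))) = bump n a b"
    by (auto simp: bump_def algebra_simps)
  ultimately show ?thesis by simp
qed

lemma bump_eq_0_iff: "n > 0 \<Longrightarrow> bump n a b t = 0 \<longleftrightarrow> t \<le> a \<or> b \<le> t"
  by (auto simp: bump_def flat_exp_eq zero_less_mult_iff)

lemma bump_nonneg: "0 \<le> bump n a b t"
  by (simp add: bump_def flat_exp_nonneg)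

lemma bump_le_1: "bump n a b t \<le> 1"
  unfolding bump_def by (intro mult_le_one flat_exp_le_1 flat_exp_nonneg)

lemma bump_tendsto_indicator: "(\<lambda>n. bump (real (Suc n)) a b t) \<longlonglongrightarrow> indicator {a<..<b} t"
proof (cases "a < t \<and> t < b")
  case True
  then have "(\<lambda>n. flat_exp (real (Suc n) * (t - a)) * flat_exp (real (Suc n) * (b - t))) \<longlonglongrightarrow> 1 * 1"
    by (intro tendsto_mult flat_exp_scaled_tendsto_1) auto
  then show ?thesis using True by (simp add: bump_def)
next
  case False
  then have "bump (real (Suc n)) a b t = 0" for n
    by (subst bump_eq_0_iff) auto
  then show ?thesis using False by simp
qed

lemma cinf_differentiable: "cinf f \<Longrightarrow> f differentiable (at x)"
  by (erule cinf.cases) auto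

lemma cinf_pd: "cinf f \<Longrightarrow> cinf (pd i f)"
  by (erule cinf.cases) auto

lemma continuous_on_cinf: "cinf f \<Longrightarrow> continuous_on UNIV f"
  by (meson cinf_differentiable continuous_at_imp_continuous_on differentiable_imp_continuous_within)

definition tensor2 :: "(real \<Rightarrow> real) \<Rightarrow> (real \<Rightarrow> real) \<Rightarrow> pt \<Rightarrow> real" where
  "tensor2 F G x = F (x $ 1) * G (x $ 2)"

lemma has_derivative_tensor2:
  assumes "\<And>t. (F has_real_derivative F' t) (at t)" "\<And>t. (G has_real_derivative G' t) (at t)"
  shows "(tensor2 F G has_derivative (\<lambda>h. F' (x$1) * h$1 * G (x$2) + F (x$1) * (G' (x$2) * h$2))) (at x)"
proof -
  have nth: "((\<lambda>y::pt. H (y $ i)) has_derivative (\<lambda>h. H' * h $ i)) (at x)"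
    if "(H has_real_derivative H') (at (x $ i))" for H H' i
    using has_derivative_compose[OF bounded_linear_imp_has_derivative[OF bounded_linear_vec_nth]
        that[unfolded has_field_derivative_def]]
    by simp
  show ?thesis
    unfolding tensor2_def
    using has_derivative_mult[OF nth[of F _ 1, OF assms(1)] nth[of G _ 2, OF assms(2)]]
    by (simp add: add.commute)
qed

lemma pd_tensor2:
  assumes "\<And>t. (F has_real_derivative F' t) (at t)" "\<And>t. (G has_real_derivative G' t) (at t)"
  shows "pd 1 (tensor2 F G) = tensor2 F' G" "pd 2 (tensor2 F G) = tensor2 F G'"
proof (rule_tac [!] ext)
  fix x :: pt
  have "pd i (tensor2 F G) x
      = F' (x$1) * (axis i 1::pt)$1 * G (x$2) + F (x$1) * (G' (x$2) * (axis i 1::pt)$2)" for i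
    unfolding pd_def frechet_derivative_at[OF has_derivative_tensor2[OF assms, of x], symmetric]
    by simp
  then show "pd 1 (tensor2 F G) x = tensor2 F' G x" "pd 2 (tensor2 F G) x = tensor2 F G' x"
    by (simp_all add: axis_def tensor2_def)
qed

lemma cinf_tensor2:
  assumes "cinf_real F" "cinf_real G"
  shows "cinf (tensor2 F G)"
proof -
  have "\<exists>F G. cinf_real F \<and> cinf_real G \<and> f = tensor2 F G \<Longrightarrow> cinf f" for f
  proof (coinduction arbitrary: f rule: cinf.coinduct)
    case cinf
    then obtain F G where F: "cinf_real F" and G: "cinf_real G" and f: "f = tensor2 F G" by auto
    obtain F' where F': "\<And>x. (F has_real_derivative F' x) (at x)" "cinf_real F'"
      using cinf_real_derivative[OF F] by blast
    obtain G' where G': "\<And>x. (G has_real_derivative G' x) (at x)" "cinf_real G'"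
      using cinf_real_derivative[OF G] by blast
    have diff: "\<forall>x. f differentiable (at x)"
      unfolding f differentiable_def using has_derivative_tensor2[OF F'(1) G'(1)] by blast
    have pd: "\<exists>F G. pd i f = tensor2 F G \<and> cinf_real F \<and> cinf_real G" for i :: 2
    proof (cases "i = 1")
      case True
      then show ?thesis using pd_tensor2(1)[OF F'(1) G'(1)] F'(2) G f by blast
    next
      case False
      then have "i = 2" using exhaust_2[of i] by blast
      then show ?thesis using pd_tensor2(2)[OF F'(1) G'(1)] G'(2) F f by blast
    qed
    show ?case
      by (rule exI[of _ f], intro conjI refl diff allI disjI1) (use pd in meson)
  qed
  then show ?thesis using assms by blast
qed

definition box_bump :: "real \<Rightarrow> pt \<Rightarrow> pt \<Rightarrow> pt \<Rightarrow> real" where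
  "box_bump n c d = tensor2 (bump n (c$1) (d$1)) (bump n (c$2) (d$2))"

lemma box_bump_nonzero_set:
  assumes "n > 0"
  shows "{x. box_bump n c d x \<noteq> 0} = box c d"
proof -
  have "box_bump n c d x \<noteq> 0 \<longleftrightarrow> x \<in> box c d" for x
    using assms unfolding box_bump_def tensor2_def mem_box_cart forall_2
    by (simp add: bump_eq_0_iff not_le)
  then show ?thesis by blast
qed

lemma test_fun_box_bump:
  assumes "n > 0" "\<And>i. c$i < d$i" "cbox c d \<subseteq> \<Omega>"
  shows "test_fun \<Omega> (box_bump n c d)"
proof -
  have "box c d \<noteq> {}" using assms(2) by (auto simp: interval_eq_empty_cart not_le)
  then have "closure {x. box_bump n c d x \<noteq> 0} = cbox c d"
    using box_bump_nonzero_set[OF assms(1)] closure_box by metis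
  then show ?thesis
    using assms by (auto simp: test_fun_def box_bump_def intro!: cinf_tensor2 cinf_real_bump)
qed

lemma box_bump_abs_le_1: "\<bar>box_bump n c d x\<bar> \<le> 1"
  unfolding box_bump_def tensor2_def using bump_nonneg bump_le_1 by (simp add: abs_mult mult_le_one)

lemma box_bump_tendsto_indicator:
  "(\<lambda>n. box_bump (real (Suc n)) c d x) \<longlonglongrightarrow> indicator (box c d) x"
proof -
  have "(\<lambda>n. box_bump (real (Suc n)) c d x)
      \<longlonglongrightarrow> indicator {c$1<..<d$1} (x$1) * indicator {c$2<..<d$2} (x$2)"
    unfolding box_bump_def tensor2_def by (intro tendsto_mult bump_tendsto_indicator)
  moreover have "indicator {c$1<..<d$1} (x$1) * indicator {c$2<..<d$2} (x$2) = (indicator (box c d) x :: real)"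
    by (auto simp: indicator_def mem_box_cart forall_2)
  ultimately show ?thesis by simp
qed

section \<open>Uniqueness of weak derivatives\<close>

lemma sets_lebesgue_open: "open (S :: 'a::euclidean_space set) \<Longrightarrow> S \<in> sets lebesgue"
  by (intro sets_completionI_sets) (simp add: borel_open)

lemma borel_measurable_lebesgue_continuous:
  "continuous_on UNIV (f :: 'a::euclidean_space \<Rightarrow> real) \<Longrightarrow> f \<in> borel_measurable lebesgue"
  by (intro measurable_completion) (simp add: borel_measurable_continuous_onI)

lemma integrable_lebesgue_indicator_compact:
  fixes h :: "'a::euclidean_space \<Rightarrow> real"
  assumes "compact K" "integrable (lebesgue_on K) h"
  shows "integrable lebesgue (\<lambda>x. indicator K x * h x)"
proof -
  have "K \<in> sets lebesgue"
    using assms(1) by (simp add: compact_imp_closed borel_closed sets_completionI_sets)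
  then show ?thesis using assms(2) integrable_restrict_space[of K lebesgue h] by simp
qed

text \<open>The densities of the positive and negative parts agree on boxes, an intersection-stable
  generator of the Borel sets.\<close>

lemma AE_zero_if_integral_box_zero_lborel:
  fixes g :: "'a::euclidean_space \<Rightarrow> real"
  assumes [measurable]: "g \<in> borel_measurable lborel" and g: "integrable lborel g"
    and box0: "\<And>a b. integral\<^sup>L lborel (\<lambda>x. indicator (box a b) x * g x) = 0"
  shows "AE x in lborel. g x = 0"
proof -
  define gp where "gp x = max 0 (g x)" for x
  define gn where "gn x = max 0 (- g x)" for x
  have [measurable]: "gp \<in> borel_measurable lborel" "gn \<in> borel_measurable lborel"
    unfolding gp_def gn_def by measurable
  have igp: "integrable lborel gp" and ign: "integrable lborel gn"
    unfolding gp_def gn_def using g by auto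
  have density_eq: "emeasure (density lborel h) A = ennreal (integral\<^sup>L lborel (\<lambda>x. indicator A x * h x))"
    if "integrable lborel h" "\<And>x. h x \<ge> 0" "A \<in> sets lborel" for h A
  proof -
    have "emeasure (density lborel h) A = (\<integral>\<^sup>+ x. ennreal (indicator A x * h x) \<partial>lborel)"
      using that by (subst emeasure_density) (auto intro!: nn_integral_cong simp: indicator_def)
    also have "\<dots> = ennreal (integral\<^sup>L lborel (\<lambda>x. indicator A x * h x))"
      by (rule nn_integral_eq_integral) (use that in \<open>auto intro: integrable_mult_indicator[of A lborel h, simplified]\<close>)
    finally show ?thesis .
  qed
  let ?E = "range (\<lambda>(a, b). box a b :: 'a set)"
  let ?A = "\<lambda>i::nat. box (- (real i *\<^sub>R One)) (real i *\<^sub>R One) :: 'a set"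
  have "density lborel gp = density lborel gn"
  proof (rule measure_eqI_generator_eq[where E = ?E and \<Omega> = UNIV and A = ?A])
    show "Int_stable ?E" by (auto simp: Int_stable_def box_Int_box)
    show "?E \<subseteq> Pow UNIV" "range ?A \<subseteq> ?E" "(\<Union>i. ?A i) = UNIV"
      using UN_box_eq_UNIV by auto
    show "sets (density lborel gp) = sigma_sets UNIV ?E" "sets (density lborel gn) = sigma_sets UNIV ?E"
      by (simp_all add: borel_eq_box)
    show "emeasure (density lborel gp) X = emeasure (density lborel gn) X" if "X \<in> ?E" for X
    proof -
      obtain a b where X: "X = box a b" using \<open>X \<in> ?E\<close> by auto
      have "integral\<^sup>L lborel (\<lambda>x. indicator X x * gp x) - integral\<^sup>L lborel (\<lambda>x. indicator X x * gn x)
          = integral\<^sup>L lborel (\<lambda>x. indicator (box a b) x * g x)"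
      proof -
        have "integral\<^sup>L lborel (\<lambda>x. indicator X x * gp x) - integral\<^sup>L lborel (\<lambda>x. indicator X x * gn x)
            = integral\<^sup>L lborel (\<lambda>x. indicator X x * gp x - indicator X x * gn x)"
          using integrable_mult_indicator[of X lborel gp] integrable_mult_indicator[of X lborel gn] igp ign
          by (intro Bochner_Integration.integral_diff[symmetric]) (auto simp: X)
        also have "(\<lambda>x. indicator X x * gp x - indicator X x * gn x) = (\<lambda>x. indicator (box a b) x * g x)"
          by (auto simp: X gp_def gn_def indicator_def max_def)
        finally show ?thesis .
      qed
      moreover have "emeasure (density lborel gp) X = ennreal (integral\<^sup>L lborel (\<lambda>x. indicator X x * gp x))"
        "emeasure (density lborel gn) X = ennreal (integral\<^sup>L lborel (\<lambda>x. indicator X x * gn x))"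
        by (intro density_eq igp ign; simp add: X gp_def gn_def)+
      ultimately show ?thesis
        using box0[of a b] by simp
    qed
    show "emeasure (density lborel gp) (?A i) \<noteq> \<infinity>" for i
    proof -
      have "emeasure (density lborel gp) (?A i) \<le> emeasure (density lborel gp) UNIV"
        by (rule emeasure_mono) auto
      also have "\<dots> < \<infinity>"
        using density_eq[OF igp, of UNIV] by (simp add: gp_def)
      finally show ?thesis by simp
    qed
  qed
  then have "AE x in lborel. ennreal (gp x) = ennreal (gn x)"
    by (intro sigma_finite_measure.density_unique[OF lborel.sigma_finite_measure_axioms]) auto
  then show ?thesis
    by eventually_elim (auto simp: gp_def gn_def max_def split: if_splits)
qed

lemma AE_zero_if_integral_box_zero:
  fixes k :: "'a::euclidean_space \<Rightarrow> real"
  assumes k: "integrable lebesgue k"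
    and box0: "\<And>a b. integral\<^sup>L lebesgue (\<lambda>x. indicator (box a b) x * k x) = 0"
  shows "AE x in lebesgue. k x = 0"
proof -
  have km: "k \<in> borel_measurable lebesgue" using k by auto
  obtain g where [measurable]: "g \<in> borel_measurable lborel" and "AE x in lborel. k x = g x"
    using completion_ex_borel_measurable_real[OF km] by auto
  from AE_completion[OF this(2)] have kg: "AE x in lebesgue. k x = g x" .
  have gL: "g \<in> borel_measurable lebesgue" by (rule measurable_completion) simp
  have "integrable lborel g"
    using k integrable_cong_AE[OF km gL kg] integrable_completion[of g] by simp
  moreover have "integral\<^sup>L lborel (\<lambda>x. indicator (box a b) x * g x) = 0" for a b
  proof -
    have "integral\<^sup>L lborel (\<lambda>x. indicator (box a b) x * g x)
        = integral\<^sup>L lebesgue (\<lambda>x. indicator (box a b) x * g x)"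
      by (rule integral_completion[symmetric]) measurable
    also have "\<dots> = integral\<^sup>L lebesgue (\<lambda>x. indicator (box a b) x * k x)"
      by (rule integral_cong_AE)
         (use kg km gL sets_lebesgue_open[OF open_box, of a b] in
          \<open>auto intro!: borel_measurable_times borel_measurable_indicator\<close>)
    finally show ?thesis using box0 by simp
  qed
  ultimately have "AE x in lborel. g x = 0"
    by (intro AE_zero_if_integral_box_zero_lborel) simp_all
  then have "AE x in lebesgue. g x = 0" by (rule AE_completion)
  with kg show ?thesis by eventually_elim simp
qed

lemma cinf_box_bump: "cinf (box_bump n c d)"
  unfolding box_bump_def by (intro cinf_tensor2 cinf_real_bump)

lemma integral_mult_box_bump_tendsto:
  fixes k :: "pt \<Rightarrow> real"
  assumes k: "integrable lebesgue k"
  shows "(\<lambda>n. integral\<^sup>L lebesgue (\<lambda>x. k x * box_bump (real (Suc n)) c d x))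
    \<longlonglongrightarrow> integral\<^sup>L lebesgue (\<lambda>x. indicator (box c d) x * k x)"
proof (rule integral_dominated_convergence[where w = "\<lambda>x. norm (k x)"])
  show "(\<lambda>x. indicator (box c d) x * k x) \<in> borel_measurable lebesgue"
    using k sets_lebesgue_open[OF open_box, of c d]
    by (auto intro!: borel_measurable_times borel_measurable_indicator)
  show "(\<lambda>x. k x * box_bump (real (Suc n)) c d x) \<in> borel_measurable lebesgue" for n
    using k borel_measurable_lebesgue_continuous[OF continuous_on_cinf[OF cinf_box_bump]]
    by (auto intro!: borel_measurable_times)
  show "AE x in lebesgue. (\<lambda>n. k x * box_bump (real (Suc n)) c d x) \<longlonglongrightarrow> indicator (box c d) x * k x"
  proof (rule AE_I2)
    show "(\<lambda>n. k x * box_bump (real (Suc n)) c d x) \<longlonglongrightarrow> indicator (box c d) x * k x" for x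
      using tendsto_mult_left[OF box_bump_tendsto_indicator, of "k x" c d x] by (simp add: mult.commute)
  qed
  show "AE x in lebesgue. norm (k x * box_bump (real (Suc n)) c d x) \<le> norm (k x)" for n
    using box_bump_abs_le_1 by (simp add: abs_mult mult_left_le)
qed (use k in simp)

lemma integral_on_eq_integral_indicator:
  fixes \<phi> h :: "'a::euclidean_space \<Rightarrow> real"
  assumes "\<Omega> \<in> sets lebesgue" "K \<subseteq> \<Omega>" "\<And>x. \<phi> x \<noteq> 0 \<Longrightarrow> x \<in> K"
  shows "integral\<^sup>L (lebesgue_on \<Omega>) (\<lambda>x. h x * \<phi> x) = integral\<^sup>L lebesgue (\<lambda>x. indicator K x * h x * \<phi> x)"
proof -
  have "integral\<^sup>L (lebesgue_on \<Omega>) (\<lambda>x. h x * \<phi> x) = integral\<^sup>L lebesgue (\<lambda>x. indicator \<Omega> x *\<^sub>R (h x * \<phi> x))"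
    by (rule integral_restrict_space) (use assms in simp)
  also have "\<dots> = integral\<^sup>L lebesgue (\<lambda>x. indicator K x * h x * \<phi> x)"
    by (rule Bochner_Integration.integral_cong[OF refl]) (use assms in \<open>auto simp: indicator_def\<close>)
  finally show ?thesis .
qed

text \<open>Smooth bumps on a box converge boundedly to its indicator, so testing against them
  recovers the integrals over boxes.\<close>

lemma AE_eq_on_box_if_test_integrals_eq:
  fixes h1 h2 :: "pt \<Rightarrow> real"
  assumes \<Omega>: "open \<Omega>" and ab: "cbox a b \<subseteq> \<Omega>"
    and loc: "integrable (lebesgue_on (cbox a b)) h1" "integrable (lebesgue_on (cbox a b)) h2"
    and eq: "\<And>\<phi>. test_fun \<Omega> \<phi> \<Longrightarrow>
       integral\<^sup>L (lebesgue_on \<Omega>) (\<lambda>x. h1 x * \<phi> x) = integral\<^sup>L (lebesgue_on \<Omega>) (\<lambda>x. h2 x * \<phi> x)"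
  shows "AE x in lebesgue. x \<in> box a b \<longrightarrow> h1 x = h2 x"
proof -
  define kc where "kc x = indicator (cbox a b) x * (h1 x - h2 x)" for x
  have ih: "integrable lebesgue (\<lambda>x. indicator (cbox a b) x * h1 x)"
    "integrable lebesgue (\<lambda>x. indicator (cbox a b) x * h2 x)"
    using integrable_lebesgue_indicator_compact[OF compact_cbox] loc by blast+
  then have ikc: "integrable lebesgue kc"
    unfolding kc_def by (auto simp: algebra_simps)
  have box0: "integral\<^sup>L lebesgue (\<lambda>x. indicator (box c d) x * kc x) = 0" if cd: "cbox c d \<subseteq> cbox a b" for c d
  proof (cases "\<forall>i. c$i < d$i")
    case False
    then have "box c d = {}" by (auto simp: interval_eq_empty_cart not_less)
    then show ?thesis by simp
  next
    case True
    have "integral\<^sup>L lebesgue (\<lambda>x. kc x * box_bump (real (Suc n)) c d x) = 0" for n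
    proof -
      have tf: "test_fun \<Omega> (box_bump (real (Suc n)) c d)"
        by (rule test_fun_box_bump) (use True cd ab in auto)
      have supp: "box_bump (real (Suc n)) c d x \<noteq> 0 \<Longrightarrow> x \<in> cbox a b" for x
        using box_bump_nonzero_set[of "real (Suc n)" c d] box_subset_cbox[of c d] cd by auto
      have bound: "integrable lebesgue (\<lambda>x. indicator (cbox a b) x * h x * box_bump (real (Suc n)) c d x)"
        if "integrable lebesgue (\<lambda>x. indicator (cbox a b) x * h x)" for h
      proof (rule Bochner_Integration.integrable_bound[OF that])
        show "(\<lambda>x. indicator (cbox a b) x * h x * box_bump (real (Suc n)) c d x) \<in> borel_measurable lebesgue"
          using borel_measurable_integrable[OF that]
            borel_measurable_lebesgue_continuous[OF continuous_on_cinf[OF cinf_box_bump]]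
          by (rule borel_measurable_times)
        show "AE x in lebesgue. norm (indicator (cbox a b) x * h x * box_bump (real (Suc n)) c d x)
            \<le> norm (indicator (cbox a b) x * h x)"
          using box_bump_abs_le_1[of "real (Suc n)" c d] by (simp add: abs_mult mult_left_le)
      qed
      let ?\<phi> = "box_bump (real (Suc n)) c d"
      have "integral\<^sup>L lebesgue (\<lambda>x. kc x * ?\<phi> x)
          = integral\<^sup>L lebesgue (\<lambda>x. indicator (cbox a b) x * h1 x * ?\<phi> x - indicator (cbox a b) x * h2 x * ?\<phi> x)"
        by (rule Bochner_Integration.integral_cong) (simp_all add: kc_def algebra_simps)
      also have "\<dots> = integral\<^sup>L lebesgue (\<lambda>x. indicator (cbox a b) x * h1 x * ?\<phi> x)
          - integral\<^sup>L lebesgue (\<lambda>x. indicator (cbox a b) x * h2 x * ?\<phi> x)"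
        by (rule Bochner_Integration.integral_diff[OF bound[OF ih(1)] bound[OF ih(2)]])
      also have "\<dots> = integral\<^sup>L (lebesgue_on \<Omega>) (\<lambda>x. h1 x * ?\<phi> x) - integral\<^sup>L (lebesgue_on \<Omega>) (\<lambda>x. h2 x * ?\<phi> x)"
        using integral_on_eq_integral_indicator[OF sets_lebesgue_open[OF \<Omega>] ab supp] by simp
      finally show ?thesis
        using eq[OF tf] by simp
    qed
    then show ?thesis
      using LIMSEQ_unique[OF integral_mult_box_bump_tendsto[OF ikc, of c d]] by simp
  qed
  have "AE x in lebesgue. indicator (box a b) x * kc x = 0"
  proof (rule AE_zero_if_integral_box_zero)
    show "integrable lebesgue (\<lambda>x. indicator (box a b) x * kc x)"
      using integrable_mult_indicator[OF sets_lebesgue_open[OF open_box] ikc] by simp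
    fix c d :: pt
    define c' where "c' = (\<chi> i. max (a$i) (c$i))"
    define d' where "d' = (\<chi> i. min (b$i) (d$i))"
    have "box c d \<inter> box a b = box c' d'"
      by (auto simp: c'_def d'_def mem_box_cart)
    then have ind: "indicator (box c d) x * (indicator (box a b) x * kc x) = indicator (box c' d') x * kc x" for x
      by (simp add: indicator_inter_arith[symmetric])
    have "cbox c' d' \<subseteq> cbox a b"
      by (auto simp: c'_def d'_def mem_box_cart)
    then show "integral\<^sup>L lebesgue (\<lambda>x. indicator (box c d) x * (indicator (box a b) x * kc x)) = 0"
      unfolding ind by (rule box0)
  qed
  then show ?thesis
    by eventually_elim (auto simp: kc_def dest: set_mp[OF box_subset_cbox])
qed

lemma rational_box_neighbourhood:
  fixes x :: pt
  assumes "open \<Omega>" "x \<in> \<Omega>"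
  obtains p q :: "2 \<Rightarrow> rat"
  where "x \<in> box (\<chi> i. of_rat (p i)) (\<chi> i. of_rat (q i))" "cbox (\<chi> i. of_rat (p i)) (\<chi> i. of_rat (q i)) \<subseteq> \<Omega>"
proof -
  obtain e where e: "e > 0" "ball x e \<subseteq> \<Omega>"
    using openE[OF assms] by blast
  obtain a b :: pt where ab: "\<forall>i\<in>Basis. a \<bullet> i \<in> \<rat> \<and> b \<bullet> i \<in> \<rat>" "x \<in> box a b" "box a b \<subseteq> ball x (e/2)"
    using rational_boxes[of "e/2" x] e(1) by auto
  have "cbox a b = closure (box a b)"
    using ab(2) closure_box by (metis empty_iff)
  also have "\<dots> \<subseteq> cball x (e/2)"
    using closure_mono[OF ab(3)] e(1) by simp
  also have "\<dots> \<subseteq> \<Omega>"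
    using e by (intro order_trans[OF _ e(2)]) (auto simp: subset_eq)
  finally have sub: "cbox a b \<subseteq> \<Omega>" .
  have "\<forall>i. \<exists>r. c $ i = of_rat r" if "\<forall>i\<in>Basis. c \<bullet> i \<in> \<rat>" for c :: pt
  proof
    fix i :: 2
    have "axis i (1 :: real) \<in> Basis" by (simp add: Basis_real_def)
    then show "\<exists>r. c $ i = of_rat r"
      using that cart_eq_inner_axis[of c i] by (metis Rats_cases)
  qed
  then obtain p q where "\<And>i. a $ i = of_rat (p i)" "\<And>i. b $ i = of_rat (q i)"
    using ab(1) by metis
  then have "a = (\<chi> i. of_rat (p i))" "b = (\<chi> i. of_rat (q i))"
    by (simp_all add: vec_eq_iff)
  then show ?thesis using that ab(2) sub by blast
qed

text \<open>The fundamental lemma of the calculus of variations (du Bois-Reymond), via a countable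
  cover of \<open>\<Omega>\<close> by rational boxes.\<close>

lemma AE_eq_if_test_integrals_eq:
  fixes h1 h2 :: "pt \<Rightarrow> real"
  assumes \<Omega>: "open \<Omega>"
    and loc: "\<And>K. compact K \<Longrightarrow> K \<subseteq> \<Omega> \<Longrightarrow>
      integrable (lebesgue_on K) h1 \<and> integrable (lebesgue_on K) h2"
    and eq: "\<And>\<phi>. test_fun \<Omega> \<phi> \<Longrightarrow>
      integral\<^sup>L (lebesgue_on \<Omega>) (\<lambda>x. h1 x * \<phi> x) = integral\<^sup>L (lebesgue_on \<Omega>) (\<lambda>x. h2 x * \<phi> x)"
  shows "AE x in lebesgue_on \<Omega>. h1 x = h2 x"
proof -
  let ?v = "\<lambda>p :: 2 \<Rightarrow> rat. (\<chi> i. of_rat (p i)) :: pt"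
  have "AE x in lebesgue. \<forall>pq :: (2 \<Rightarrow> rat) \<times> (2 \<Rightarrow> rat).
      cbox (?v (fst pq)) (?v (snd pq)) \<subseteq> \<Omega> \<longrightarrow> x \<in> box (?v (fst pq)) (?v (snd pq)) \<longrightarrow> h1 x = h2 x"
    unfolding AE_all_countable
  proof
    fix pq :: "(2 \<Rightarrow> rat) \<times> (2 \<Rightarrow> rat)"
    show "AE x in lebesgue. cbox (?v (fst pq)) (?v (snd pq)) \<subseteq> \<Omega> \<longrightarrow>
        x \<in> box (?v (fst pq)) (?v (snd pq)) \<longrightarrow> h1 x = h2 x"
    proof (cases "cbox (?v (fst pq)) (?v (snd pq)) \<subseteq> \<Omega>")
      case True
      with AE_eq_on_box_if_test_integrals_eq[OF \<Omega> True _ _ eq] loc[OF compact_cbox True]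
      show ?thesis by simp
    qed simp
  qed
  then have "AE x in lebesgue. x \<in> \<Omega> \<longrightarrow> h1 x = h2 x"
    by eventually_elim (metis rational_box_neighbourhood[OF \<Omega>] fst_conv snd_conv)
  then show ?thesis
    by (subst AE_restrict_space_iff) (auto simp: sets_lebesgue_open[OF \<Omega>])
qed

lemma weak_pd_unique:
  assumes "open \<Omega>" "weak_pd \<Omega> i f g1" "weak_pd \<Omega> i f g2"
  shows "AE x in lebesgue_on \<Omega>. g1 x = g2 x"
  by (rule AE_eq_if_test_integrals_eq) (use assms in \<open>auto simp: weak_pd_def\<close>)

section \<open>Symmetry of mixed products of partial derivatives\<close>

lemma pd_eq_0_outside_support:
  assumes "x \<notin> closure {x. f x \<noteq> 0}"
  shows "pd i f x = 0"
proof -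
  have "((\<lambda>_. 0) has_derivative (\<lambda>_. 0)) (at x)" by simp
  then have "(f has_derivative (\<lambda>_. 0)) (at x)"
    by (rule has_derivative_transform_within_open[where s = "- closure {x. f x \<noteq> 0}"])
       (use assms closure_subset[of "{x. f x \<noteq> 0}"] in auto)
  then show ?thesis unfolding pd_def using frechet_derivative_at by metis
qed

lemma test_fun_pd_nonzero_imp_mem: "test_fun \<Omega> \<phi> \<Longrightarrow> pd i \<phi> x \<noteq> 0 \<Longrightarrow> x \<in> \<Omega>"
  using pd_eq_0_outside_support unfolding test_fun_def by blast

lemma test_fun_UNIV: "test_fun \<Omega> \<phi> \<Longrightarrow> test_fun UNIV \<phi>"
  by (simp add: test_fun_def)

lemma bounded_if_compact_support:
  fixes g :: "'a::euclidean_space \<Rightarrow> real"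
  assumes "continuous_on UNIV g" "compact K" "\<And>x. g x \<noteq> 0 \<Longrightarrow> x \<in> K"
  obtains B where "\<And>x. \<bar>g x\<bar> \<le> B"
proof -
  have "compact (g ` K)" by (meson assms compact_continuous_image continuous_on_subset subset_UNIV)
  then obtain B where B: "\<And>y. y \<in> g ` K \<Longrightarrow> norm y \<le> B"
    by (meson bounded_iff compact_imp_bounded)
  have "\<bar>g x\<bar> \<le> max B 0" for x
    using B[of "g x"] assms(3)[of x] by (cases "x \<in> K") fastforce+
  then show ?thesis by (rule that)
qed

lemma integrable_lborel_if_compact_support:
  fixes g :: "'a::euclidean_space \<Rightarrow> real"
  assumes "continuous_on UNIV g" "compact K" "\<And>x. g x \<noteq> 0 \<Longrightarrow> x \<in> K"
  shows "integrable lborel g"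
proof -
  have "integrable lborel (\<lambda>x. indicator K x *\<^sub>R g x)"
    by (rule borel_integrable_compact) (use assms in \<open>auto intro: continuous_on_subset\<close>)
  moreover have "(\<lambda>x. indicator K x *\<^sub>R g x) = g"
  proof
    show "indicator K x *\<^sub>R g x = g x" for x
      using assms(3)[of x] by (cases "x \<in> K") auto
  qed
  ultimately show ?thesis by simp
qed

lemma integral_lborel_translate:
  fixes F :: "'a::euclidean_space \<Rightarrow> real"
  assumes "F \<in> borel_measurable borel"
  shows "integral\<^sup>L lborel (\<lambda>x. F (x + c)) = integral\<^sup>L lborel F"
proof -
  have "integral\<^sup>L lborel F = integral\<^sup>L (distr lborel borel ((+) c)) F"
    by (simp add: lborel_distr_plus)
  also have "\<dots> = integral\<^sup>L lborel (\<lambda>x. F (c + x))"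
    by (rule integral_distr) (use assms in auto)
  finally show ?thesis by (simp add: add.commute)
qed

lemma continuous_on_test_fun_shift:
  "test_fun \<Omega> a \<Longrightarrow> continuous_on UNIV (\<lambda>x. a (x + u))"
  by (rule continuous_on_compose2[OF continuous_on_cinf]) (auto simp: test_fun_def intro!: continuous_intros)

lemma integral_test_fun_shift_mult:
  assumes a: "test_fun UNIV a" and b: "test_fun UNIV b"
  shows "integrable lborel (\<lambda>x. a (x + u) * b (x + w))"
    and "integral\<^sup>L lborel (\<lambda>x. a (x + u) * b (x + w)) = integral\<^sup>L lborel (\<lambda>x. a x * b (x + (w - u)))"
proof -
  have cont: "continuous_on UNIV (\<lambda>x. a (x + u) * b (x + w))" for u w
    using continuous_on_test_fun_shift[OF a] continuous_on_test_fun_shift[OF b]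
    by (rule continuous_on_mult)
  let ?S = "closure {x. a x \<noteq> 0}"
  show "integrable lborel (\<lambda>x. a (x + u) * b (x + w))"
  proof (rule integrable_lborel_if_compact_support[OF cont])
    show "compact ((\<lambda>x. x - u) ` ?S)"
      using a by (intro compact_continuous_image continuous_intros) (auto simp: test_fun_def)
    show "x \<in> (\<lambda>x. x - u) ` ?S" if "a (x + u) * b (x + w) \<noteq> 0" for x
      using that closure_subset[of "{x. a x \<noteq> 0}"] by (intro rev_image_eqI[of "x + u"]) auto
  qed
  have "integral\<^sup>L lborel (\<lambda>x. a (x + u) * b (x + w)) = integral\<^sup>L lborel (\<lambda>x. a (x + 0) * b (x + (w - u)))"
    using integral_lborel_translate[OF borel_measurable_continuous_onI[OF cont[of 0 "w - u"]], of u]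
    by (simp add: algebra_simps)
  then show "integral\<^sup>L lborel (\<lambda>x. a (x + u) * b (x + w)) = integral\<^sup>L lborel (\<lambda>x. a x * b (x + (w - u)))"
    by simp
qed

definition diff_quot :: "2 \<Rightarrow> (pt \<Rightarrow> real) \<Rightarrow> real \<Rightarrow> pt \<Rightarrow> real" where
  "diff_quot i f t x = (f (x + t *\<^sub>R axis i 1) - f x) / t"

text \<open>Expanded, the product of difference quotients is a combination of four terms
  \<open>a (x + u) b (x + w)\<close>, whose integrals depend only on \<open>w - u\<close> by translation invariance;
  this exchanges the roles of the two directions.\<close>

lemma integral_diff_quot_swap:
  assumes a: "test_fun UNIV a" and b: "test_fun UNIV b"
  shows "integral\<^sup>L lborel (\<lambda>x. diff_quot 1 a h x * diff_quot 2 b h x)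
       = integral\<^sup>L lborel (\<lambda>x. diff_quot 2 a (-h) x * diff_quot 1 b (-h) x)"
proof -
  define G where "G u w x = a (x + u) * b (x + w)" for u w x
  have int: "integrable lborel (G u w)" and shift: "integral\<^sup>L lborel (G u w) = integral\<^sup>L lborel (G 0 (w - u))"
    for u w using integral_test_fun_shift_mult[OF a b] by (simp_all add: G_def[abs_def])
  have comb: "integral\<^sup>L lborel (\<lambda>x. (G u1 w1 x - G u2 w2 x - G u3 w3 x + G u4 w4 x) / c)
      = (integral\<^sup>L lborel (G u1 w1) - integral\<^sup>L lborel (G u2 w2) - integral\<^sup>L lborel (G u3 w3)
          + integral\<^sup>L lborel (G u4 w4)) / c" for u1 w1 u2 w2 u3 w3 u4 w4 c
    using int by (simp add: Bochner_Integration.integral_diff Bochner_Integration.integral_add)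
  let ?e1 = "h *\<^sub>R axis 1 1 :: pt" and ?e2 = "h *\<^sub>R axis 2 1 :: pt"
  have "integral\<^sup>L lborel (\<lambda>x. diff_quot 1 a h x * diff_quot 2 b h x)
      = integral\<^sup>L lborel (\<lambda>x. (G ?e1 ?e2 x - G ?e1 0 x - G 0 ?e2 x + G 0 0 x) / h^2)"
    unfolding diff_quot_def G_def
    by (rule Bochner_Integration.integral_cong) (simp_all add: field_simps power2_eq_square)
  also have "\<dots> = (integral\<^sup>L lborel (G 0 (?e2 - ?e1)) - integral\<^sup>L lborel (G 0 (- ?e1))
       - integral\<^sup>L lborel (G 0 ?e2) + integral\<^sup>L lborel (G 0 0)) / h^2"
    unfolding comb by (subst (1 2 3) shift) simp
  also have "\<dots> = integral\<^sup>L lborel (\<lambda>x. (G (- ?e2) (- ?e1) x - G (- ?e2) 0 x - G 0 (- ?e1) x + G 0 0 x) / h^2)"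
    unfolding comb by (subst (5 6 7) shift) (simp add: algebra_simps)
  also have "\<dots> = integral\<^sup>L lborel (\<lambda>x. diff_quot 2 a (-h) x * diff_quot 1 b (-h) x)"
    unfolding diff_quot_def G_def
    by (rule Bochner_Integration.integral_cong) (simp_all add: field_simps power2_eq_square)
  finally show ?thesis .
qed

lemma cinf_has_real_derivative_line:
  assumes "cinf f"
  shows "((\<lambda>t. f (x + t *\<^sub>R v)) has_real_derivative frechet_derivative f (at (x + s *\<^sub>R v)) v) (at s)"
proof -
  let ?D = "frechet_derivative f (at (x + s *\<^sub>R v))"
  have fd: "(f has_derivative ?D) (at (x + s *\<^sub>R v))"
    using cinf_differentiable[OF assms] frechet_derivative_works by blast
  have "((\<lambda>t. x + t *\<^sub>R v) has_derivative (\<lambda>t. t *\<^sub>R v)) (at s)"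
    by (auto intro!: derivative_eq_intros)
  from has_derivative_compose[OF this fd]
  have "((\<lambda>t. f (x + t *\<^sub>R v)) has_derivative (\<lambda>t. ?D (t *\<^sub>R v))) (at s)" .
  moreover have "(\<lambda>t. ?D (t *\<^sub>R v)) = (*) (?D v)"
    using linear_cmul[OF has_derivative_linear[OF fd]] by (auto simp: fun_eq_iff)
  ultimately show ?thesis
    by (simp only: has_field_derivative_def)
qed

lemma diff_quot_tendsto_pd:
  assumes "cinf f" "s \<longlonglongrightarrow> 0" "\<And>n. s n \<noteq> 0"
  shows "(\<lambda>n. diff_quot i f (s n) x) \<longlonglongrightarrow> pd i f x"
proof -
  have "((\<lambda>t. (f (x + t *\<^sub>R axis i 1) - f x) / t) \<longlongrightarrow> pd i f x) (at 0)"
    using cinf_has_real_derivative_line[OF assms(1), of x "axis i 1" 0] by (simp add: DERIV_def pd_def)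
  moreover have "filterlim s (at 0) sequentially"
    by (rule filterlim_atI) (use assms in auto)
  ultimately show ?thesis
    unfolding diff_quot_def by (rule filterlim_compose)
qed

lemma diff_quot_bounded_support:
  assumes f: "test_fun UNIV f"
  obtains B r where "\<And>x t. \<bar>diff_quot i f t x\<bar> \<le> B"
    "\<And>x t. \<bar>t\<bar> \<le> 1 \<Longrightarrow> diff_quot i f t x \<noteq> 0 \<Longrightarrow> norm x \<le> r"
proof -
  let ?S = "closure {x. f x \<noteq> 0}"
  have cf: "cinf f" and K: "compact ?S" using f by (auto simp: test_fun_def)
  obtain B where B: "\<And>y. \<bar>pd i f y\<bar> \<le> B"
    using bounded_if_compact_support[OF continuous_on_cinf[OF cinf_pd[OF cf]] K]
      pd_eq_0_outside_support by blast
  have "\<bar>f (x + t *\<^sub>R axis i 1) - f x\<bar> \<le> B * \<bar>t\<bar>" for x t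
  proof -
    have "norm ((\<lambda>t. f (x + t *\<^sub>R axis i 1)) t - (\<lambda>t. f (x + t *\<^sub>R axis i 1)) 0) \<le> B * norm (t - 0)"
      by (rule field_differentiable_bound[where S = UNIV
            and f' = "\<lambda>s. frechet_derivative f (at (x + s *\<^sub>R axis i 1)) (axis i 1)"])
         (use cinf_has_real_derivative_line[OF cf] B in \<open>auto simp: pd_def\<close>)
    then show ?thesis by simp
  qed
  then have bound: "\<bar>diff_quot i f t x\<bar> \<le> B" for x t
    using B[of x] by (cases "t = 0") (auto simp: diff_quot_def abs_divide divide_le_eq)
  obtain r where r: "\<And>y. y \<in> ?S \<Longrightarrow> norm y \<le> r"
    using compact_imp_bounded[OF K] by (auto simp: bounded_iff)
  have "norm x \<le> r + 1" if t: "\<bar>t\<bar> \<le> 1" and nz: "diff_quot i f t x \<noteq> 0" for x t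
  proof -
    have "f (x + t *\<^sub>R axis i 1) \<noteq> 0 \<or> f x \<noteq> 0"
      using nz by (auto simp: diff_quot_def)
    then have "x + t *\<^sub>R axis i 1 \<in> ?S \<or> x \<in> ?S"
      using closure_subset[of "{x. f x \<noteq> 0}"] by blast
    moreover have "norm (t *\<^sub>R axis i 1 :: pt) \<le> 1" using t by simp
    moreover have "norm x \<le> norm (x + t *\<^sub>R axis i 1) + norm (t *\<^sub>R axis i 1 :: pt)"
      using norm_triangle_ineq4[of "x + t *\<^sub>R axis i 1" "t *\<^sub>R axis i 1"] by simp
    ultimately show ?thesis
      using r[of x] r[of "x + t *\<^sub>R axis i 1"] by linarith
  qed
  with bound show ?thesis by (rule that)
qed

lemma integral_diff_quot_tendsto:
  assumes a: "test_fun UNIV a" and b: "test_fun UNIV b"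
    and s: "s \<longlonglongrightarrow> 0" "\<And>n. s n \<noteq> 0" "\<And>n. \<bar>s n\<bar> \<le> 1"
  shows "(\<lambda>n. integral\<^sup>L lborel (\<lambda>x. diff_quot i a (s n) x * diff_quot j b (s n) x))
     \<longlonglongrightarrow> integral\<^sup>L lborel (\<lambda>x. pd i a x * pd j b x)"
proof -
  obtain Ba ra where Ba: "\<And>x t. \<bar>diff_quot i a t x\<bar> \<le> Ba"
    and ra: "\<And>x t. \<bar>t\<bar> \<le> 1 \<Longrightarrow> diff_quot i a t x \<noteq> 0 \<Longrightarrow> norm x \<le> ra"
    using diff_quot_bounded_support[OF a] by metis
  obtain Bb where Bb: "\<And>x t. \<bar>diff_quot j b t x\<bar> \<le> Bb"
    using diff_quot_bounded_support[OF b] by metis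
  have ca: "cinf a" and cb: "cinf b" using a b by (simp_all add: test_fun_def)
  show ?thesis
  proof (rule integral_dominated_convergence[where w = "\<lambda>x. indicator (cball 0 ra) x * (Ba * Bb)"])
    show "(\<lambda>x. pd i a x * pd j b x) \<in> borel_measurable lborel"
      using continuous_on_mult[OF continuous_on_cinf[OF cinf_pd[OF ca]] continuous_on_cinf[OF cinf_pd[OF cb]]]
      by (simp add: borel_measurable_continuous_onI)
    show "(\<lambda>x. diff_quot i a (s n) x * diff_quot j b (s n) x) \<in> borel_measurable lborel" for n
    proof -
      have "continuous_on UNIV (\<lambda>x. diff_quot i a (s n) x * diff_quot j b (s n) x)"
        unfolding diff_quot_def using s(2)[of n]
        by (intro continuous_intros continuous_on_test_fun_shift[OF a] continuous_on_test_fun_shift[OF b]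
            continuous_on_cinf ca cb) auto
      then show ?thesis by (simp add: borel_measurable_continuous_onI)
    qed
    show "integrable lborel (\<lambda>x. indicator (cball 0 ra) x * (Ba * Bb))"
      using borel_integrable_compact[of "cball 0 ra" "\<lambda>_. Ba * Bb"] by simp
    show "AE x in lborel. (\<lambda>n. diff_quot i a (s n) x * diff_quot j b (s n) x) \<longlonglongrightarrow> pd i a x * pd j b x"
      by (intro AE_I2 tendsto_mult diff_quot_tendsto_pd ca cb s(1,2))
    show "AE x in lborel. norm (diff_quot i a (s n) x * diff_quot j b (s n) x)
        \<le> indicator (cball 0 ra) x * (Ba * Bb)" for n
    proof (rule AE_I2)
      fix x
      have nonneg: "0 \<le> Ba" "0 \<le> Bb"
        using abs_ge_zero[of "diff_quot i a 0 0"] Ba[of 0 0] abs_ge_zero[of "diff_quot j b 0 0"] Bb[of 0 0]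
        by linarith+
      moreover have "\<bar>diff_quot i a (s n) x\<bar> * \<bar>diff_quot j b (s n) x\<bar> \<le> Ba * Bb"
        using Ba Bb nonneg by (intro mult_mono) auto
      ultimately show "norm (diff_quot i a (s n) x * diff_quot j b (s n) x)
          \<le> indicator (cball 0 ra) x * (Ba * Bb)"
        using ra[OF s(3)] by (cases "diff_quot i a (s n) x = 0") (auto simp: abs_mult indicator_def)
    qed
  qed
qed

lemma integral_pd_mult_commute_lborel:
  assumes "test_fun UNIV a" "test_fun UNIV b"
  shows "integral\<^sup>L lborel (\<lambda>x. pd 1 a x * pd 2 b x) = integral\<^sup>L lborel (\<lambda>x. pd 2 a x * pd 1 b x)"
proof -
  define s where "s n = 1 / real (Suc n)" for n
  have "s \<longlonglongrightarrow> 0"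
    unfolding s_def by (rule LIMSEQ_Suc[OF lim_const_over_n])
  then have s: "s \<longlonglongrightarrow> 0" "\<And>n. s n \<noteq> 0" "\<And>n. \<bar>s n\<bar> \<le> 1"
    by (auto simp: s_def)
  have "(\<lambda>n. integral\<^sup>L lborel (\<lambda>x. diff_quot 1 a (s n) x * diff_quot 2 b (s n) x))
      \<longlonglongrightarrow> integral\<^sup>L lborel (\<lambda>x. pd 1 a x * pd 2 b x)"
    by (rule integral_diff_quot_tendsto[OF assms s])
  moreover have "(\<lambda>n. integral\<^sup>L lborel (\<lambda>x. diff_quot 2 a (- s n) x * diff_quot 1 b (- s n) x))
      \<longlonglongrightarrow> integral\<^sup>L lborel (\<lambda>x. pd 2 a x * pd 1 b x)"
    using s by (intro integral_diff_quot_tendsto[OF assms]) (auto intro: tendsto_minus_cancel_left[THEN iffD1])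
  ultimately show ?thesis
    unfolding integral_diff_quot_swap[OF assms] by (rule LIMSEQ_unique)
qed

lemma integral_lebesgue_on_eq_lborel:
  fixes F :: "'a::euclidean_space \<Rightarrow> real"
  assumes \<Omega>: "open \<Omega>" and c: "continuous_on UNIV F" and s: "\<And>x. F x \<noteq> 0 \<Longrightarrow> x \<in> \<Omega>"
  shows "integral\<^sup>L (lebesgue_on \<Omega>) F = integral\<^sup>L lborel F"
proof -
  have "integral\<^sup>L (lebesgue_on \<Omega>) F = integral\<^sup>L lebesgue (\<lambda>x. indicator \<Omega> x *\<^sub>R F x)"
    by (rule integral_restrict_space) (simp add: sets_lebesgue_open[OF \<Omega>])
  also have "\<dots> = integral\<^sup>L lebesgue F"
    by (rule Bochner_Integration.integral_cong[OF refl]) (use s in \<open>auto simp: indicator_def\<close>)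
  also have "\<dots> = integral\<^sup>L lborel F"
    by (rule integral_completion) (simp add: borel_measurable_continuous_onI[OF c])
  finally show ?thesis .
qed

lemma integral_pd_mult_commute:
  assumes \<Omega>: "open \<Omega>" and a: "test_fun \<Omega> a" and b: "test_fun \<Omega> b"
  shows "integral\<^sup>L (lebesgue_on \<Omega>) (\<lambda>x. pd 1 a x * pd 2 b x)
       = integral\<^sup>L (lebesgue_on \<Omega>) (\<lambda>x. pd 2 a x * pd 1 b x)"
proof -
  have cont: "continuous_on UNIV (\<lambda>x. pd i a x * pd j b x)" for i j
    using a b unfolding test_fun_def by (intro continuous_on_mult continuous_on_cinf cinf_pd) simp_all
  have supp: "pd i a x * pd j b x \<noteq> 0 \<Longrightarrow> x \<in> \<Omega>" for i j x
    using test_fun_pd_nonzero_imp_mem[OF a] by auto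
  have "integral\<^sup>L (lebesgue_on \<Omega>) (\<lambda>x. pd 1 a x * pd 2 b x) = integral\<^sup>L lborel (\<lambda>x. pd 1 a x * pd 2 b x)"
    by (rule integral_lebesgue_on_eq_lborel[OF \<Omega> cont supp])
  also have "\<dots> = integral\<^sup>L lborel (\<lambda>x. pd 2 a x * pd 1 b x)"
    by (rule integral_pd_mult_commute_lborel[OF test_fun_UNIV[OF a] test_fun_UNIV[OF b]])
  also have "\<dots> = integral\<^sup>L (lebesgue_on \<Omega>) (\<lambda>x. pd 2 a x * pd 1 b x)"
    by (rule integral_lebesgue_on_eq_lborel[OF \<Omega> cont supp, symmetric])
  finally show ?thesis .
qed

definition square_integrable :: "'a measure \<Rightarrow> ('a \<Rightarrow> real) \<Rightarrow> bool" where
  "square_integrable M f \<longleftrightarrow> f \<in> borel_measurable M \<and> integrable M (\<lambda>x. (f x)\<^sup>2)"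

lemma L2_iff_square_integrable: "L2 \<Omega> f \<longleftrightarrow> square_integrable (lebesgue_on \<Omega>) f"
  by (simp add: L2_def square_integrable_def)

lemma integrable_mult_if_square_integrable:
  assumes "square_integrable M f" "square_integrable M g"
  shows "integrable M (\<lambda>x. f x * g x)"
proof (rule Bochner_Integration.integrable_bound[where f = "\<lambda>x. (f x)\<^sup>2 + (g x)\<^sup>2"])
  show "integrable M (\<lambda>x. (f x)\<^sup>2 + (g x)\<^sup>2)"
    using assms by (simp add: square_integrable_def)
  show "(\<lambda>x. f x * g x) \<in> borel_measurable M"
    using assms unfolding square_integrable_def by (auto intro!: borel_measurable_times)
  show "AE x in M. norm (f x * g x) \<le> norm ((f x)\<^sup>2 + (g x)\<^sup>2)"
  proof (rule AE_I2)
    fix x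
    have "2 * \<bar>f x\<bar> * \<bar>g x\<bar> \<le> (f x)\<^sup>2 + (g x)\<^sup>2"
      using sum_squares_bound[of "\<bar>f x\<bar>" "\<bar>g x\<bar>"] by simp
    moreover have "0 \<le> \<bar>f x\<bar> * \<bar>g x\<bar>" by simp
    ultimately have "\<bar>f x\<bar> * \<bar>g x\<bar> \<le> (f x)\<^sup>2 + (g x)\<^sup>2" by linarith
    then show "norm (f x * g x) \<le> norm ((f x)\<^sup>2 + (g x)\<^sup>2)"
      by (simp add: abs_mult)
  qed
qed

lemma square_integrable_lincomb:
  assumes "square_integrable M f" "square_integrable M g"
  shows "square_integrable M (\<lambda>x. s * f x + t * g x)"
proof -
  have "integrable M (\<lambda>x. s^2 * (f x * f x) + 2 * s * t * (f x * g x) + t^2 * (g x * g x))"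
    using integrable_mult_if_square_integrable[OF assms(1) assms(1)]
      integrable_mult_if_square_integrable[OF assms(1) assms(2)]
      integrable_mult_if_square_integrable[OF assms(2) assms(2)]
    by simp
  moreover have "(\<lambda>x. s^2 * (f x * f x) + 2 * s * t * (f x * g x) + t^2 * (g x * g x)) = (\<lambda>x. (s * f x + t * g x)\<^sup>2)"
    by (auto simp: power2_eq_square algebra_simps)
  ultimately show ?thesis
    using assms unfolding square_integrable_def by (auto intro!: borel_measurable_times borel_measurable_add)
qed

lemma square_integrable_diff:
  "square_integrable M f \<Longrightarrow> square_integrable M g \<Longrightarrow> square_integrable M (\<lambda>x. f x - g x)"
  using square_integrable_lincomb[of M f g 1 "-1"] by simp

lemma Cauchy_Schwarz_integral:
  assumes p: "square_integrable M p" and q: "square_integrable M q"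
  shows "\<bar>integral\<^sup>L M (\<lambda>x. p x * q x)\<bar> \<le> sqrt (integral\<^sup>L M (\<lambda>x. (p x)\<^sup>2)) * sqrt (integral\<^sup>L M (\<lambda>x. (q x)\<^sup>2))"
proof -
  define A where "A = integral\<^sup>L M (\<lambda>x. (p x)\<^sup>2)"
  define B where "B = integral\<^sup>L M (\<lambda>x. (q x)\<^sup>2)"
  define C where "C = integral\<^sup>L M (\<lambda>x. p x * q x)"
  have ip: "integrable M (\<lambda>x. (p x)\<^sup>2)" and iq: "integrable M (\<lambda>x. (q x)\<^sup>2)"
    and ipq: "integrable M (\<lambda>x. p x * q x)"
    using p q integrable_mult_if_square_integrable[OF p q] by (auto simp: square_integrable_def)
  have A0: "A \<ge> 0" and B0: "B \<ge> 0" unfolding A_def B_def by simp_all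
  have quad: "0 \<le> t^2 * A - 2 * t * C + B" for t
  proof -
    have "0 \<le> integral\<^sup>L M (\<lambda>x. (t * p x - q x)\<^sup>2)" by simp
    also have "(\<lambda>x. (t * p x - q x)\<^sup>2) = (\<lambda>x. t^2 * (p x)\<^sup>2 - 2 * t * (p x * q x) + (q x)\<^sup>2)"
      by (auto simp: power2_eq_square algebra_simps)
    also have "integral\<^sup>L M \<dots> = t^2 * A - 2 * t * C + B"
      using ip iq ipq by (simp add: A_def B_def C_def)
    finally show ?thesis .
  qed
  have "C^2 \<le> A * B"
  proof (cases "A > 0")
    case True
    have "0 \<le> (C/A)^2 * A - 2 * (C/A) * C + B" by (rule quad)
    also have "\<dots> = B - C^2 / A"
      using True by (simp add: power2_eq_square field_simps)
    finally show ?thesis using True by (simp add: divide_le_eq mult.commute)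
  next
    case False
    then have "A = 0" using A0 by simp
    have "C = 0"
    proof (rule ccontr)
      assume "C \<noteq> 0"
      have "0 \<le> ((B + 1) / (2 * C))^2 * A - 2 * ((B + 1) / (2 * C)) * C + B" by (rule quad)
      also have "\<dots> = -1" using \<open>A = 0\<close> \<open>C \<noteq> 0\<close> by (simp add: field_simps)
      finally show False by simp
    qed
    then show ?thesis using A0 B0 by simp
  qed
  then have "sqrt (C^2) \<le> sqrt (A * B)" by (rule real_sqrt_le_mono)
  then show ?thesis by (simp add: A_def B_def C_def real_sqrt_mult)
qed

lemma integral_mult_tendsto_if_L2_tendsto:
  assumes fs: "\<And>n. square_integrable M (fs n)" and f: "square_integrable M f"
    and gs: "\<And>n. square_integrable M (gs n)" and g: "square_integrable M g"
    and fs_lim: "(\<lambda>n. integral\<^sup>L M (\<lambda>x. (fs n x - f x)\<^sup>2)) \<longlonglongrightarrow> 0"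
    and gs_lim: "(\<lambda>n. integral\<^sup>L M (\<lambda>x. (gs n x - g x)\<^sup>2)) \<longlonglongrightarrow> 0"
  shows "(\<lambda>n. integral\<^sup>L M (\<lambda>x. fs n x * gs n x)) \<longlonglongrightarrow> integral\<^sup>L M (\<lambda>x. f x * g x)"
proof -
  define A where "A n = integral\<^sup>L M (\<lambda>x. (fs n x - f x)\<^sup>2)" for n
  define B where "B n = integral\<^sup>L M (\<lambda>x. (gs n x - g x)\<^sup>2)" for n
  have df: "square_integrable M (\<lambda>x. fs n x - f x)" for n by (rule square_integrable_diff[OF fs f])
  have dg: "square_integrable M (\<lambda>x. gs n x - g x)" for n by (rule square_integrable_diff[OF gs g])
  note prod = integrable_mult_if_square_integrable
  have split: "integral\<^sup>L M (\<lambda>x. fs n x * gs n x) - integral\<^sup>L M (\<lambda>x. f x * g x)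
     = integral\<^sup>L M (\<lambda>x. (fs n x - f x) * (gs n x - g x)) + integral\<^sup>L M (\<lambda>x. (fs n x - f x) * g x)
       + integral\<^sup>L M (\<lambda>x. f x * (gs n x - g x))" for n
  proof -
    have "integral\<^sup>L M (\<lambda>x. fs n x * gs n x) - integral\<^sup>L M (\<lambda>x. f x * g x)
        = integral\<^sup>L M (\<lambda>x. fs n x * gs n x - f x * g x)"
      using prod[OF fs gs] prod[OF f g] by simp
    also have "\<dots> = integral\<^sup>L M (\<lambda>x. (fs n x - f x) * (gs n x - g x) + (fs n x - f x) * g x + f x * (gs n x - g x))"
      by (rule Bochner_Integration.integral_cong) (auto simp: algebra_simps)
    finally show ?thesis
      using prod[OF df dg] prod[OF df g] prod[OF f dg] by simp
  qed
  let ?Y = "\<lambda>n. sqrt (A n) * sqrt (B n) + sqrt (A n) * sqrt (integral\<^sup>L M (\<lambda>x. (g x)\<^sup>2))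
    + sqrt (integral\<^sup>L M (\<lambda>x. (f x)\<^sup>2)) * sqrt (B n)"
  have bound: "norm (integral\<^sup>L M (\<lambda>x. fs n x * gs n x) - integral\<^sup>L M (\<lambda>x. f x * g x)) \<le> ?Y n" for n
    unfolding split A_def B_def real_norm_def
    using Cauchy_Schwarz_integral[OF df[of n] dg[of n]] Cauchy_Schwarz_integral[OF df[of n] g]
      Cauchy_Schwarz_integral[OF f dg[of n]]
    by (smt (verit, best))
  have "?Y \<longlonglongrightarrow> sqrt 0 * sqrt 0 + sqrt 0 * sqrt (integral\<^sup>L M (\<lambda>x. (g x)\<^sup>2))
      + sqrt (integral\<^sup>L M (\<lambda>x. (f x)\<^sup>2)) * sqrt 0"
    unfolding A_def B_def by (intro tendsto_intros fs_lim gs_lim)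
  then have "?Y \<longlonglongrightarrow> 0" by simp
  then have "(\<lambda>n. integral\<^sup>L M (\<lambda>x. fs n x * gs n x) - integral\<^sup>L M (\<lambda>x. f x * g x)) \<longlonglongrightarrow> 0"
    by (rule Lim_null_comparison[rotated]) (use bound in auto)
  then show ?thesis by (rule LIM_zero_cancel)
qed

section \<open>The density \<open>G\<close> and the inequality\<close>

lemma integral_lebesgue_on_cong_AE:
  fixes f g :: "'a::euclidean_space \<Rightarrow> real"
  assumes \<Omega>: "\<Omega> \<in> sets lebesgue" and f: "integrable (lebesgue_on \<Omega>) f"
    and ae: "AE x in lebesgue_on \<Omega>. f x = g x"
  shows "integral\<^sup>L (lebesgue_on \<Omega>) g = integral\<^sup>L (lebesgue_on \<Omega>) f"
proof -
  have S: "\<Omega> \<inter> space lebesgue \<in> sets lebesgue" using \<Omega> by simp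
  have "(\<lambda>x. indicator \<Omega> x *\<^sub>R f x) \<in> borel_measurable lebesgue"
    using borel_measurable_integrable[OF f] borel_measurable_restrict_space_iff[OF S] by blast
  moreover have "AE x in lebesgue. indicator \<Omega> x *\<^sub>R f x = indicator \<Omega> x *\<^sub>R g x"
    using ae unfolding AE_restrict_space_iff[OF S] by eventually_elim (auto simp: indicator_def)
  ultimately have "(\<lambda>x. indicator \<Omega> x *\<^sub>R g x) \<in> borel_measurable lebesgue"
    by (rule borel_measurable_AE)
  then have "g \<in> borel_measurable (lebesgue_on \<Omega>)"
    using borel_measurable_restrict_space_iff[OF S] by blast
  with f ae show ?thesis
    by (intro integral_cong_AE) auto
qed

lemma norm_vec3_power2: "(norm (v :: real^3))\<^sup>2 = (v$1)\<^sup>2 + (v$2)\<^sup>2 + (v$3)\<^sup>2"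
  by (simp add: norm_vec_def L2_set_def sum_3)

lemma Gdens_eq:
  "Gdens v M = (norm v)\<^sup>2
     + ((M$1$1 + M$2$2)\<^sup>2 + (M$2$3 + v$1)\<^sup>2 + (v$2 - M$1$3)\<^sup>2 + (M$1$2 - M$2$1 + v$3)\<^sup>2)
     + 2 * (M$1$2 * M$2$1 - M$1$1 * M$2$2)"
  unfolding Gdens_def norm_vec3_power2 sum_2 sum_3 by (simp add: power2_eq_square algebra_simps)

lemma integral_Gdens_ge:
  fixes u :: "'a \<Rightarrow> real^3" and M :: "'a \<Rightarrow> real^3^2"
  assumes u: "\<And>k. square_integrable \<mu> (\<lambda>x. u x $ k)"
    and M: "\<And>i k. square_integrable \<mu> (\<lambda>x. M x $ i $ k)"
    and jacobian: "integral\<^sup>L \<mu> (\<lambda>x. M x$1$2 * M x$2$1) = integral\<^sup>L \<mu> (\<lambda>x. M x$1$1 * M x$2$2)"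
  shows "integrable \<mu> (\<lambda>x. Gdens (u x) (M x))"
    and "integral\<^sup>L \<mu> (\<lambda>x. (norm (u x))\<^sup>2) \<le> integral\<^sup>L \<mu> (\<lambda>x. Gdens (u x) (M x))"
proof -
  define N where "N x = (M x$1$1 + M x$2$2)\<^sup>2 + (M x$2$3 + u x$1)\<^sup>2 + (u x$2 - M x$1$3)\<^sup>2
      + (M x$1$2 - M x$2$1 + u x$3)\<^sup>2" for x
  define P where "P x = M x$1$2 * M x$2$1 - M x$1$1 * M x$2$2" for x
  have G: "Gdens (u x) (M x) = (norm (u x))\<^sup>2 + N x + 2 * P x" for x
    unfolding Gdens_eq N_def P_def ..
  have sq: "square_integrable \<mu> f \<Longrightarrow> integrable \<mu> (\<lambda>x. (f x)\<^sup>2)" for f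
    by (simp add: square_integrable_def)
  note lin = square_integrable_lincomb
  have iu: "integrable \<mu> (\<lambda>x. (norm (u x))\<^sup>2)"
    unfolding norm_vec3_power2 using sq[OF u] by simp
  have "integrable \<mu> (\<lambda>x. (1 * M x$1$1 + 1 * M x$2$2)\<^sup>2)" "integrable \<mu> (\<lambda>x. (1 * M x$2$3 + 1 * u x$1)\<^sup>2)"
    "integrable \<mu> (\<lambda>x. (1 * u x$2 + (-1) * M x$1$3)\<^sup>2)"
    "integrable \<mu> (\<lambda>x. (1 * (1 * M x$1$2 + (-1) * M x$2$1) + 1 * u x$3)\<^sup>2)"
    by (intro sq lin M u)+
  then have iN: "integrable \<mu> N" unfolding N_def by simp
  have iP: "integrable \<mu> P"
    unfolding P_def using integrable_mult_if_square_integrable[OF M M] by simp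
  have P0: "integral\<^sup>L \<mu> P = 0"
    unfolding P_def using integrable_mult_if_square_integrable[OF M M] jacobian by simp
  show "integrable \<mu> (\<lambda>x. Gdens (u x) (M x))"
    unfolding G using iu iN iP by simp
  have "integral\<^sup>L \<mu> (\<lambda>x. Gdens (u x) (M x)) = integral\<^sup>L \<mu> (\<lambda>x. (norm (u x))\<^sup>2) + integral\<^sup>L \<mu> N"
    unfolding G using iu iN iP P0 by simp
  moreover have "0 \<le> integral\<^sup>L \<mu> N"
    by (simp add: N_def)
  ultimately show "integral\<^sup>L \<mu> (\<lambda>x. (norm (u x))\<^sup>2) \<le> integral\<^sup>L \<mu> (\<lambda>x. Gdens (u x) (M x))"
    by simp
qed

definition H10_approx :: "pt set \<Rightarrow> (pt \<Rightarrow> real) \<Rightarrow> (2 \<Rightarrow> pt \<Rightarrow> real) \<Rightarrow> (nat \<Rightarrow> pt \<Rightarrow> real) \<Rightarrow> bool" where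
  "H10_approx \<Omega> f g \<phi> \<longleftrightarrow> (\<forall>i. weak_pd \<Omega> i f (g i) \<and> L2 \<Omega> (g i)) \<and> (\<forall>n. test_fun \<Omega> (\<phi> n)) \<and>
     (\<lambda>n. integral\<^sup>L (lebesgue_on \<Omega>) (\<lambda>x. (\<phi> n x - f x)\<^sup>2)
        + (\<Sum>i\<in>UNIV. integral\<^sup>L (lebesgue_on \<Omega>) (\<lambda>x. (pd i (\<phi> n) x - g i x)\<^sup>2))) \<longlonglongrightarrow> 0"

lemma H10_iff: "H10 \<Omega> f \<longleftrightarrow> L2 \<Omega> f \<and> (\<exists>g \<phi>. H10_approx \<Omega> f g \<phi>)"
  by (simp add: H10_def H10_approx_def)

lemma H10_approx_pd_tendsto:
  assumes "H10_approx \<Omega> f g \<phi>"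
  shows "(\<lambda>n. integral\<^sup>L (lebesgue_on \<Omega>) (\<lambda>x. (pd i (\<phi> n) x - g i x)\<^sup>2)) \<longlonglongrightarrow> 0"
proof (rule Lim_null_comparison)
  let ?I = "\<lambda>n i. integral\<^sup>L (lebesgue_on \<Omega>) (\<lambda>x. (pd i (\<phi> n) x - g i x)\<^sup>2)"
  let ?E = "\<lambda>n. integral\<^sup>L (lebesgue_on \<Omega>) (\<lambda>x. (\<phi> n x - f x)\<^sup>2) + (\<Sum>i\<in>UNIV. ?I n i)"
  show "?E \<longlonglongrightarrow> 0"
    using assms by (simp add: H10_approx_def)
  have "norm (?I n i) \<le> ?E n" for n
  proof -
    have "?I n i \<le> (\<Sum>i\<in>UNIV. ?I n i)"
      by (rule member_le_sum) auto
    moreover have "0 \<le> integral\<^sup>L (lebesgue_on \<Omega>) (\<lambda>x. (\<phi> n x - f x)\<^sup>2)" "0 \<le> ?I n i"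
      by simp_all
    ultimately show ?thesis by (simp add: add_increasing)
  qed
  then show "\<forall>\<^sub>F n in sequentially. norm (?I n i) \<le> ?E n"
    by simp
qed

lemma square_integrable_pd_test_fun:
  assumes \<Omega>: "open \<Omega>" and \<phi>: "test_fun \<Omega> \<phi>"
  shows "square_integrable (lebesgue_on \<Omega>) (pd i \<phi>)"
proof -
  have cont: "continuous_on UNIV (pd i \<phi>)"
    using \<phi> by (simp add: test_fun_def continuous_on_cinf cinf_pd)
  have supp: "(pd i \<phi> x)\<^sup>2 \<noteq> 0 \<Longrightarrow> x \<in> closure {x. \<phi> x \<noteq> 0}" for x
    using pd_eq_0_outside_support by fastforce
  have "integrable lborel (\<lambda>x. (pd i \<phi> x)\<^sup>2)"
    using \<phi> by (intro integrable_lborel_if_compact_support[OF _ _ supp] continuous_intros cont)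
             (simp add: test_fun_def)
  then have "integrable lebesgue (\<lambda>x. (pd i \<phi> x)\<^sup>2)"
    using cont by (simp add: integrable_completion borel_measurable_continuous_onI)
  moreover have "(\<lambda>x. indicator \<Omega> x *\<^sub>R (pd i \<phi> x)\<^sup>2) = (\<lambda>x. (pd i \<phi> x)\<^sup>2)"
  proof
    show "indicator \<Omega> x *\<^sub>R (pd i \<phi> x)\<^sup>2 = (pd i \<phi> x)\<^sup>2" for x
      using test_fun_pd_nonzero_imp_mem[OF \<phi>, of i x] by (cases "x \<in> \<Omega>") auto
  qed
  ultimately have "integrable (lebesgue_on \<Omega>) (\<lambda>x. (pd i \<phi> x)\<^sup>2)"
    by (subst integrable_restrict_space) (auto simp: sets_lebesgue_open[OF \<Omega>])
  moreover have "pd i \<phi> \<in> borel_measurable (lebesgue_on \<Omega>)"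
    by (rule measurable_restrict_space1) (rule borel_measurable_lebesgue_continuous[OF cont])
  ultimately show ?thesis by (simp add: square_integrable_def)
qed

text \<open>The null Lagrangian identity passes from test functions to \<open>H\<^sup>1\<^sub>0\<close>, since products of
  \<open>L\<^sup>2\<close>-convergent sequences converge in \<open>L\<^sup>1\<close>.\<close>

lemma integral_weak_pd_mult_commute:
  assumes \<Omega>: "open \<Omega>" and f: "H10_approx \<Omega> f g \<phi>" and f': "H10_approx \<Omega> f' g' \<psi>"
  shows "integral\<^sup>L (lebesgue_on \<Omega>) (\<lambda>x. g 1 x * g' 2 x) = integral\<^sup>L (lebesgue_on \<Omega>) (\<lambda>x. g 2 x * g' 1 x)"
proof -
  have test: "\<And>n. test_fun \<Omega> (\<phi> n)" "\<And>n. test_fun \<Omega> (\<psi> n)"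
    and L2: "\<And>i. square_integrable (lebesgue_on \<Omega>) (g i)" "\<And>i. square_integrable (lebesgue_on \<Omega>) (g' i)"
    using f f' by (auto simp: H10_approx_def L2_iff_square_integrable)
  have lim: "(\<lambda>n. integral\<^sup>L (lebesgue_on \<Omega>) (\<lambda>x. pd i (\<phi> n) x * pd j (\<psi> n) x))
      \<longlonglongrightarrow> integral\<^sup>L (lebesgue_on \<Omega>) (\<lambda>x. g i x * g' j x)" for i j
    by (intro integral_mult_tendsto_if_L2_tendsto square_integrable_pd_test_fun[OF \<Omega>] test L2
        H10_approx_pd_tendsto[OF f] H10_approx_pd_tendsto[OF f'])
  show ?thesis
    using lim[of 1 2] unfolding integral_pd_mult_commute[OF \<Omega> test]
    by (rule LIMSEQ_unique[OF _ lim[of 2 1]])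
qed

theorem lemma3p5:
  fixes \<Omega> :: "(real^2) set"
  assumes "C11_domain \<Omega>"
  shows "\<exists>c>0. \<forall>(u :: real^2 \<Rightarrow> real^3) (D :: real^2 \<Rightarrow> real^3^2).
           (\<forall>k. H10 \<Omega> (\<lambda>x. u x $ k)) \<and>
           (\<forall>i k. weak_pd \<Omega> i (\<lambda>x. u x $ k) (\<lambda>x. D x $ i $ k)) \<longrightarrow>
           integral\<^sup>L (lebesgue_on \<Omega>) (\<lambda>x. Gdens (u x) (D x))
             \<ge> c * integral\<^sup>L (lebesgue_on \<Omega>) (\<lambda>x. (norm (u x))\<^sup>2)"
proof (intro exI[of _ 1] conjI allI impI)
  have \<Omega>: "open \<Omega>" using assms by (simp add: C11_domain_def)
  let ?\<mu> = "lebesgue_on \<Omega>"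
  fix u :: "pt \<Rightarrow> real^3" and D :: "pt \<Rightarrow> real^3^2"
  assume "(\<forall>k. H10 \<Omega> (\<lambda>x. u x $ k)) \<and> (\<forall>i k. weak_pd \<Omega> i (\<lambda>x. u x $ k) (\<lambda>x. D x $ i $ k))"
  then have H10: "\<And>k. H10 \<Omega> (\<lambda>x. u x $ k)" and D: "\<And>i k. weak_pd \<Omega> i (\<lambda>x. u x $ k) (\<lambda>x. D x $ i $ k)"
    by auto
  obtain g \<phi> where approx: "\<And>k. H10_approx \<Omega> (\<lambda>x. u x $ k) (g k) (\<phi> k)"
    using H10 unfolding H10_iff by metis
  define M where "M x = (\<chi> i k. g k i x)" for x
  have u: "square_integrable ?\<mu> (\<lambda>x. u x $ k)" for k
    using H10 by (simp add: H10_iff L2_iff_square_integrable)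
  have M: "square_integrable ?\<mu> (\<lambda>x. M x $ i $ k)" for i k
    using approx by (simp add: M_def H10_approx_def L2_iff_square_integrable)
  have "integral\<^sup>L ?\<mu> (\<lambda>x. M x$1$2 * M x$2$1) = integral\<^sup>L ?\<mu> (\<lambda>x. M x$1$1 * M x$2$2)"
    using integral_weak_pd_mult_commute[OF \<Omega> approx approx, of 2 1] by (simp add: M_def mult.commute)
  note G = integral_Gdens_ge[OF u M this]
  have "AE x in ?\<mu>. \<forall>i k. D x $ i $ k = g k i x"
    using weak_pd_unique[OF \<Omega> D] approx by (simp add: AE_all_countable H10_approx_def)
  then have "AE x in ?\<mu>. M x = D x"
    by eventually_elim (simp add: M_def vec_eq_iff)
  then have "AE x in ?\<mu>. Gdens (u x) (M x) = Gdens (u x) (D x)"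
    by eventually_elim simp
  then have "integral\<^sup>L ?\<mu> (\<lambda>x. Gdens (u x) (D x)) = integral\<^sup>L ?\<mu> (\<lambda>x. Gdens (u x) (M x))"
    by (rule integral_lebesgue_on_cong_AE[OF sets_lebesgue_open[OF \<Omega>] G(1)])
  with G(2) show "1 * integral\<^sup>L ?\<mu> (\<lambda>x. (norm (u x))\<^sup>2) \<le> integral\<^sup>L ?\<mu> (\<lambda>x. Gdens (u x) (D x))"
    by simp
qed simp

end
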